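(* Let $f:\{0,1\}^3\to\{0,1\}$ be $f(x_1,x_2,x_3)=(x_1\wedge x_2)\vee(\bar x_1\wedge\bar x_2\wedge x_3)$, where $\bar y$ denotes the negation of the bit $y$. Then $Q_E(f)=2$, while every parity decision tree computing $f$ has depth at least $3$.
   Context: Quantum query model: a $t$-query quantum query algorithm on inputs $x\in\{0,1\}^m$ acts on a Hilbert space $\mathcal H_{\rm in}\otimes\mathcal H_{\rm work}\otimes\mathcal H_{\rm out}$, where $\mathcal H_{\rm in}$ has orthonormal basis $|0\rangle,\dots,|m\rangle$, $\mathcal H_{\rm work}$ is a finite-dimensional workspace of arbitrary size, and $\mathcal H_{\rm out}$ is one qubit. It is specified by input-independent unitaries $U_0,\dots,U_t$, and on input $x$ produces the state $U_tO_xU_{t-1}O_x\cdots O_xU_0|0\rangle$ ($t$ applications of $O_x$), where the oracle $O_x$ acts on $\mathcal H_{\rm in}$ by $|i\rangle\mapsto(-1)^{x_i}|i\rangle$ with the convention $x_0=0$ (and as the identity on the other registers). The output is obtained by measuring $\mathcal H_{\rm out}$ in the computational basis. The algorithm computes $h$ exactly if for every $x$ the output equals $h(x)$ with probability $1$. $Q_E(h)$ is the minimum $t$ such that some $t$-query quantum query algorithm computes $h$ exactly. A parity decision tree is a rooted binary tree in which every internal vertex has exactly two children and each internal vertex $v$ is labelled by a subset $S_v$ of input positions, and each leaf is labelled $0$ or $1$. On input $x$, evaluation starts at the root; at internal vertex $v$ the parity $\bigoplus_{i\in S_v}x_i$ is computed, and the left subtree is evaluated if it is $0$ and the right subtree if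 it is $1$; the output is the label of the leaf reached. Its depth is the maximum length of a root-to-leaf path. *)

theory Defs
  imports Complex_Main
begin

text \<open>An input x in {0,1}^m is a bool list of length m; bit i (1 <= i <= m) is xs ! (i-1);
  by convention bit 0 is False (x_0 = 0).  Out-of-range positions also read False.\<close>

definition bit :: "bool list \<Rightarrow> nat \<Rightarrow> bool" where
  "bit xs i = (if 1 \<le> i \<and> i \<le> length xs then xs ! (i - 1) else False)"

text \<open>Hilbert space H_in (x) H_work (x) H_out of dimension (m+1) * W * 2, W >= 1 the workspace
  dimension.  Basis index of |i>|w>|b> is (i * W + w) * 2 + b.  Operators are N x N complex
  matrices given as functions nat => nat => complex (entries outside [0,N) ignored),
  states are vectors nat => complex.\<close>

definition qdim :: "nat \<Rightarrow> nat \<Rightarrow> nat" where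
  "qdim m W = (m + 1) * W * 2"

definition is_unitary :: "nat \<Rightarrow> (nat \<Rightarrow> nat \<Rightarrow> complex) \<Rightarrow> bool" where
  "is_unitary N U \<longleftrightarrow>
     (\<forall>j<N. \<forall>k<N. (\<Sum>i<N. cnj (U i j) * U i k) = (if j = k then 1 else 0))"

definition apply_op :: "nat \<Rightarrow> (nat \<Rightarrow> nat \<Rightarrow> complex) \<Rightarrow> (nat \<Rightarrow> complex) \<Rightarrow> (nat \<Rightarrow> complex)" where
  "apply_op N U v = (\<lambda>i. \<Sum>j<N. U i j * v j)"

text \<open>Query operator O_x: |i>|w>|b> -> (-1)^{x_i} |i>|w>|b>; the input register of basis index k is
  k div (2 W).\<close>
definition query_op :: "nat \<Rightarrow> bool list \<Rightarrow> (nat \<Rightarrow> complex) \<Rightarrow> (nat \<Rightarrow> complex)" where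
  "query_op W xs v = (\<lambda>k. (if bit xs (k div (2 * W)) then -1 else 1) * v k)"

definition init_state :: "nat \<Rightarrow> complex" where
  "init_state = (\<lambda>k. if k = 0 then 1 else 0)"

fun run_rest :: "nat \<Rightarrow> nat \<Rightarrow> bool list \<Rightarrow> (nat \<Rightarrow> nat \<Rightarrow> complex) list
                   \<Rightarrow> (nat \<Rightarrow> complex) \<Rightarrow> (nat \<Rightarrow> complex)" where
  "run_rest m W xs [] v = v"
| "run_rest m W xs (U # Us) v = run_rest m W xs Us (apply_op (qdim m W) U (query_op W xs v))"

text \<open>Final state U_t O_x ... O_x U_0 |0> for Us = [U_0, ..., U_t].\<close>
fun final_state :: "nat \<Rightarrow> nat \<Rightarrow> bool list \<Rightarrow> (nat \<Rightarrow> nat \<Rightarrow> complex) list \<Rightarrow> (nat \<Rightarrow> complex)" where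
  "final_state m W xs [] = init_state"
| "final_state m W xs (U # Us) = run_rest m W xs Us (apply_op (qdim m W) U init_state)"

definition out_prob :: "nat \<Rightarrow> nat \<Rightarrow> (nat \<Rightarrow> complex) \<Rightarrow> bool \<Rightarrow> real" where
  "out_prob m W v b = (\<Sum>k | k < qdim m W \<and> (odd k \<longleftrightarrow> b). (cmod (v k))\<^sup>2)"

definition is_query_alg :: "nat \<Rightarrow> nat \<Rightarrow> nat \<Rightarrow> (nat \<Rightarrow> nat \<Rightarrow> complex) list \<Rightarrow> bool" where
  "is_query_alg m t W Us \<longleftrightarrow> 1 \<le> W \<and> length Us = t + 1 \<and> (\<forall>U\<in>set Us. is_unitary (qdim m W) U)"

definition computes_exactly :: "nat \<Rightarrow> nat \<Rightarrow> (nat \<Rightarrow> nat \<Rightarrow> complex) list \<Rightarrow> (bool list \<Rightarrow> bool) \<Rightarrow> bool" where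
  "computes_exactly m W Us h \<longleftrightarrow>
     (\<forall>xs. length xs = m \<longrightarrow> out_prob m W (final_state m W xs Us) (h xs) = 1)"

definition Q_E :: "nat \<Rightarrow> (bool list \<Rightarrow> bool) \<Rightarrow> nat" where
  "Q_E m h = (LEAST t. \<exists>W Us. is_query_alg m t W Us \<and> computes_exactly m W Us h)"

datatype pdt = Leaf bool | Node "nat set" pdt pdt

fun pdt_valid :: "nat \<Rightarrow> pdt \<Rightarrow> bool" where
  "pdt_valid m (Leaf b) = True"
| "pdt_valid m (Node S l r) = (S \<subseteq> {1..m} \<and> pdt_valid m l \<and> pdt_valid m r)"

definition parity :: "nat set \<Rightarrow> bool list \<Rightarrow> bool" where
  "parity S xs = odd (card {i \<in> S. bit xs i})"

fun pdt_eval :: "pdt \<Rightarrow> bool list \<Rightarrow> bool" where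
  "pdt_eval (Leaf b) xs = b"
| "pdt_eval (Node S l r) xs = (if parity S xs then pdt_eval r xs else pdt_eval l xs)"

fun pdt_depth :: "pdt \<Rightarrow> nat" where
  "pdt_depth (Leaf b) = 0"
| "pdt_depth (Node S l r) = Suc (max (pdt_depth l) (pdt_depth r))"

definition pdt_computes :: "nat \<Rightarrow> pdt \<Rightarrow> (bool list \<Rightarrow> bool) \<Rightarrow> bool" where
  "pdt_computes m T h \<longleftrightarrow> pdt_valid m T \<and> (\<forall>xs. length xs = m \<longrightarrow> pdt_eval T xs = h xs)"

definition f3 :: "bool list \<Rightarrow> bool" where
  "f3 xs = ((bit xs 1 \<and> bit xs 2) \<or> (\<not> bit xs 1 \<and> \<not> bit xs 2 \<and> bit xs 3))"

end

theory Submission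
  imports Defs
begin

(* Lower bound on Q_E: every exact algorithm leaves a normalised final state, so its
   acceptance probability equals h(x).  With no query this probability is constant; with one
   query it is a quadratic form in the input signs (-1)^{x_i} (the polynomial method), hence
   orthogonal on {0,1}^3 to the top character chi(x) = (-1)^{x1+x2+x3}.  But f has nonzero
   correlation with chi, so one query does not suffice.

   Upper bound on Q_E: an explicit 2-query algorithm with a one-dimensional workspace, given
   by three 8x8 unitaries whose unitarity and correctness are checked by computation.

   Parity decision trees: a tree of depth at most 2 computes a function of the form
   "if parity S then parity R xor c2 else parity L xor c1"; an exhaustive check over the
   membership patterns of positions 1, 2, 3 in S, L, R shows that f is not of that form. *)

section \<open>Quantum query algorithms preserve the norm\<close>

definition state_norm :: "nat \<Rightarrow> (nat \<Rightarrow> complex) \<Rightarrow> real" where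
  "state_norm N v = (\<Sum>i<N. (cmod (v i))\<^sup>2)"

lemma cmod_square_cnj: "complex_of_real ((cmod z)\<^sup>2) = cnj z * z"
  by (metis complex_norm_square mult.commute)

text \<open>Unitaries preserve the norm: expand the squared norm as a Hermitian form and use the
  orthonormality of the columns of U.\<close>
lemma unitary_preserves_norm:
  assumes "is_unitary N U"
  shows "state_norm N (apply_op N U v) = state_norm N v"
proof -
  have orth: "\<And>j k. j < N \<Longrightarrow> k < N \<Longrightarrow>
      (\<Sum>i<N. cnj (U i j) * U i k) = (if j = k then 1 else 0)"
    using assms unfolding is_unitary_def by blast
  have "complex_of_real (state_norm N (apply_op N U v))
        = (\<Sum>i<N. cnj (apply_op N U v i) * apply_op N U v i)"
    by (simp only: state_norm_def of_real_sum cmod_square_cnj)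
  also have "\<dots> = (\<Sum>i<N. \<Sum>k<N. \<Sum>j<N. (cnj (v j) * v k) * (cnj (U i j) * U i k))"
    unfolding apply_op_def by (simp add: sum_product mult_ac)
  also have "\<dots> = (\<Sum>k<N. \<Sum>j<N. (cnj (v j) * v k) * (\<Sum>i<N. cnj (U i j) * U i k))"
    by (subst sum.swap, rule sum.cong, rule refl, subst sum.swap) (simp add: sum_distrib_left)
  also have "\<dots> = (\<Sum>k<N. \<Sum>j<N. (cnj (v j) * v k) * (if j = k then 1 else 0))"
    by (intro sum.cong refl) (simp add: orth)
  also have "\<dots> = (\<Sum>j<N. cnj (v j) * v j)"
    by (simp add: if_distrib cong: if_cong)
  also have "\<dots> = complex_of_real (state_norm N v)"
    by (simp only: state_norm_def of_real_sum cmod_square_cnj)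
  finally show ?thesis by (simp only: of_real_eq_iff)
qed

text \<open>The oracle only changes signs of amplitudes.\<close>
lemma query_preserves_norm: "state_norm N (query_op W xs v) = state_norm N v"
  unfolding state_norm_def query_op_def by (intro sum.cong refl) (simp add: norm_mult)

lemma run_rest_preserves_norm:
  assumes "\<forall>U\<in>set Us. is_unitary (qdim m W) U"
  shows "state_norm (qdim m W) (run_rest m W xs Us v) = state_norm (qdim m W) v"
  using assms
  by (induction Us arbitrary: v) (simp_all add: unitary_preserves_norm query_preserves_norm)

lemma init_state_norm:
  assumes "0 < N"
  shows "state_norm N init_state = 1"
proof -
  have "state_norm N init_state = (\<Sum>i<N. if i = 0 then 1 else 0)"
    unfolding state_norm_def by (intro sum.cong refl) (simp add: init_state_def)
  also have "\<dots> = 1" using assms by simp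
  finally show ?thesis .
qed

lemma final_state_norm:
  assumes alg: "is_query_alg m t W Us"
  shows "state_norm (qdim m W) (final_state m W xs Us) = 1"
proof -
  obtain U Us' where Us: "Us = U # Us'"
    using alg unfolding is_query_alg_def by (cases Us) auto
  have unitary: "\<forall>U\<in>set Us. is_unitary (qdim m W) U" and "0 < qdim m W"
    using alg unfolding is_query_alg_def qdim_def by simp_all
  then have "state_norm (qdim m W) (apply_op (qdim m W) U init_state) = 1"
    by (simp add: Us unitary_preserves_norm init_state_norm)
  with unitary show ?thesis by (simp add: Us run_rest_preserves_norm)
qed

lemma out_prob_total: "out_prob m W v True + out_prob m W v False = state_norm (qdim m W) v"
proof -
  have split: "\<And>b. {k. k < qdim m W \<and> (odd k \<longleftrightarrow> b)} = {k\<in>{..<qdim m W}. odd k \<longleftrightarrow> b}"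
    by auto
  show ?thesis
    unfolding out_prob_def state_norm_def split sum.inter_filter[OF finite_lessThan]
    by (simp add: sum.distrib[symmetric] cong: if_cong) (intro sum.cong refl, simp)
qed

lemma out_prob_total_final:
  assumes "is_query_alg m t W Us"
  shows "out_prob m W (final_state m W xs Us) True + out_prob m W (final_state m W xs Us) False = 1"
  using out_prob_total final_state_norm[OF assms] by simp

lemma exact_acceptance:
  assumes alg: "is_query_alg m t W Us" and exact: "computes_exactly m W Us h"
    and len: "length xs = m"
  shows "out_prob m W (final_state m W xs Us) True = of_bool (h xs)"
  using exact len out_prob_total_final[OF alg, of xs]
  unfolding computes_exactly_def by (cases "h xs") auto

lemma exact_if_wrong_output_impossible:
  assumes alg: "is_query_alg m t W Us"
    and wrong: "\<And>xs. length xs = m \<Longrightarrow> out_prob m W (final_state m W xs Us) (\<not> h xs) = 0"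
  shows "computes_exactly m W Us h"
  unfolding computes_exactly_def
proof (intro allI impI)
  fix xs :: "bool list" assume len: "length xs = m"
  show "out_prob m W (final_state m W xs Us) (h xs) = 1"
    using wrong[OF len] out_prob_total_final[OF alg, of xs]
    by (cases "h xs") auto
qed

section \<open>Algorithms with at most one query\<close>

definition sgn_bit :: "bool list \<Rightarrow> nat \<Rightarrow> complex" where
  "sgn_bit xs i = (if bit xs i then -1 else 1)"

lemma cnj_sgn_bit [simp]: "cnj (sgn_bit xs i) = sgn_bit xs i"
  by (simp add: sgn_bit_def)

text \<open>Without queries the final state, hence the output, does not depend on the input.\<close>
lemma zero_query_constant:
  assumes alg: "is_query_alg m 0 W Us" and exact: "computes_exactly m W Us h"
    and "length xs = m" "length ys = m"
  shows "h xs = h ys"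
proof -
  obtain U where "Us = [U]"
    using alg unfolding is_query_alg_def by (cases Us) auto
  then have "final_state m W xs Us = final_state m W ys Us" by simp
  then have "(of_bool (h xs) :: real) = of_bool (h ys)"
    using exact_acceptance[OF alg exact] assms(3,4) by metis
  then show ?thesis by (cases "h xs"; cases "h ys") simp_all
qed

lemma one_query_acceptance_quadratic:
  assumes alg: "is_query_alg m 1 W Us"
  shows "\<exists>(N::nat) F g. \<forall>xs. complex_of_real (out_prob m W (final_state m W xs Us) True)
                     = (\<Sum>j<N. \<Sum>l<N. F j l * (sgn_bit xs (g j) * sgn_bit xs (g l)))"
proof -
  define N where "N = qdim m W"
  obtain U0 U1 where Us: "Us = [U0, U1]"
    using alg unfolding is_query_alg_def by (cases Us; cases "tl Us") auto
  define c where "c k j = U1 k j * apply_op N U0 init_state j" for k j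
  define g where "g j = j div (2 * W)" for j
  define F where "F j l = (\<Sum>k<N. of_bool (odd k) * (cnj (c k j) * c k l))" for j l
  text \<open>Each final amplitude is a linear form in the signs; the output probability is then a
    sum of squared moduli of such forms.\<close>
  have final: "final_state m W xs Us k = (\<Sum>j<N. c k j * sgn_bit xs (g j))" for xs k
    by (simp add: Us N_def c_def g_def apply_op_def query_op_def sgn_bit_def mult_ac)
  have "complex_of_real (out_prob m W (final_state m W xs Us) True)
      = (\<Sum>j<N. \<Sum>l<N. F j l * (sgn_bit xs (g j) * sgn_bit xs (g l)))" for xs
  proof -
    have odd_part: "{k. k < N \<and> (odd k \<longleftrightarrow> True)} = {k\<in>{..<N}. odd k}" by auto
    have "complex_of_real (out_prob m W (final_state m W xs Us) True)
        = (\<Sum>k<N. of_bool (odd k) * (cnj (final_state m W xs Us k) * final_state m W xs Us k))"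
      unfolding out_prob_def N_def[symmetric] odd_part sum.inter_filter[OF finite_lessThan]
        of_real_sum
      by (intro sum.cong refl) (simp add: cmod_square_cnj flip: of_real_power)
    also have "\<dots> = (\<Sum>k<N. \<Sum>j<N. \<Sum>l<N.
                      of_bool (odd k) * (cnj (c k j) * c k l) * (sgn_bit xs (g j) * sgn_bit xs (g l)))"
      unfolding final by (simp add: sum_product sum_distrib_left mult_ac)
    also have "\<dots> = (\<Sum>j<N. \<Sum>k<N. \<Sum>l<N.
                      of_bool (odd k) * (cnj (c k j) * c k l) * (sgn_bit xs (g j) * sgn_bit xs (g l)))"
      by (rule sum.swap)
    also have "\<dots> = (\<Sum>j<N. \<Sum>l<N. F j l * (sgn_bit xs (g j) * sgn_bit xs (g l)))"
      unfolding F_def sum_distrib_right by (rule sum.cong[OF refl], rule sum.swap)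
    finally show ?thesis .
  qed
  then show ?thesis by blast
qed

section \<open>Fourier analysis on the 3-cube\<close>

definition cube3 :: "bool list set" where
  "cube3 = {xs. length xs = 3}"

lemma cube3_enum:
  "cube3 = {[False,False,False], [False,False,True], [False,True,False], [False,True,True],
            [True,False,False], [True,False,True], [True,True,False], [True,True,True]}"
proof -
  have "length xs = 3 \<longleftrightarrow> (\<exists>a b c. xs = [a,b,c])" for xs :: "bool list"
    by (auto simp: numeral_3_eq_3 length_Suc_conv)
  then show ?thesis unfolding cube3_def by (auto intro: bool.exhaust)
qed

lemma sum_cube3:
  "(\<Sum>xs\<in>cube3. g xs) = g [False,False,False] + g [False,False,True] + g [False,True,False]
     + g [False,True,True] + g [True,False,False] + g [True,False,True] + g [True,True,False]
     + g [True,True,True]"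
  by (simp add: cube3_enum add_ac)

lemma bit_cube3: "bit [p,q,r] i = (i = 1 \<and> p \<or> i = 2 \<and> q \<or> i = 3 \<and> r)"
proof -
  have "1 \<le> i \<and> i \<le> 3 \<longleftrightarrow> i = 1 \<or> i = 2 \<or> i = 3" by auto
  then show ?thesis unfolding bit_def by (auto simp: numeral_3_eq_3)
qed

definition chi :: "bool list \<Rightarrow> complex" where
  "chi xs = sgn_bit xs 1 * sgn_bit xs 2 * sgn_bit xs 3"

text \<open>A product of at most two signs is orthogonal to the top character (position 0 and
  positions beyond 3 contribute the constant sign 1).\<close>
lemma chi_orthogonal_two_signs: "(\<Sum>xs\<in>cube3. chi xs * (sgn_bit xs a * sgn_bit xs b)) = 0"
  unfolding sum_cube3 chi_def sgn_bit_def bit_cube3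
  by (cases "a=1"; cases "a=2"; cases "a=3"; cases "b=1"; cases "b=2"; cases "b=3"; simp)

lemma chi_orthogonal_quadratic:
  "(\<Sum>xs\<in>cube3. chi xs * (\<Sum>j<N. \<Sum>l<N. F j l * (sgn_bit xs (g j) * sgn_bit xs (g l)))) = 0"
proof -
  let ?s = "\<lambda>xs j l. sgn_bit xs (g j) * sgn_bit xs (g l)"
  have "(\<Sum>xs\<in>cube3. chi xs * (\<Sum>j<N. \<Sum>l<N. F j l * ?s xs j l))
      = (\<Sum>xs\<in>cube3. \<Sum>j<N. \<Sum>l<N. F j l * (chi xs * ?s xs j l))"
    by (simp add: sum_distrib_left mult_ac)
  also have "\<dots> = (\<Sum>j<N. \<Sum>xs\<in>cube3. \<Sum>l<N. F j l * (chi xs * ?s xs j l))"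
    by (rule sum.swap)
  also have "\<dots> = (\<Sum>j<N. \<Sum>l<N. \<Sum>xs\<in>cube3. F j l * (chi xs * ?s xs j l))"
    by (intro sum.cong refl) (rule sum.swap)
  also have "\<dots> = (\<Sum>j<N. \<Sum>l<N. F j l * (\<Sum>xs\<in>cube3. chi xs * ?s xs j l))"
    by (simp add: sum_distrib_left)
  also have "\<dots> = 0" by (simp add: chi_orthogonal_two_signs)
  finally show ?thesis .
qed

lemma one_query_top_coefficient:
  assumes alg: "is_query_alg 3 1 W Us" and exact: "computes_exactly 3 W Us h"
  shows "(\<Sum>xs\<in>cube3. chi xs * of_bool (h xs)) = 0"
proof -
  obtain N :: nat and F g where quad:
      "\<And>xs. complex_of_real (out_prob 3 W (final_state 3 W xs Us) True)
              = (\<Sum>j<N. \<Sum>l<N. F j l * (sgn_bit xs (g j) * sgn_bit xs (g l)))"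
    using one_query_acceptance_quadratic[OF alg] by blast
  have "(\<Sum>xs\<in>cube3. chi xs * of_bool (h xs))
      = (\<Sum>xs\<in>cube3. chi xs * complex_of_real (out_prob 3 W (final_state 3 W xs Us) True))"
    by (intro sum.cong refl) (simp add: exact_acceptance[OF alg exact] cube3_def)
  also have "\<dots> = 0" unfolding quad by (rule chi_orthogonal_quadratic)
  finally show ?thesis .
qed

lemma f3_cube3: "f3 [x,y,z] = (x \<and> y \<or> \<not> x \<and> \<not> y \<and> z)"
  by (simp add: f3_def bit_cube3)

lemma f3_top_coefficient: "(\<Sum>xs\<in>cube3. chi xs * of_bool (f3 xs)) = -1"
  unfolding sum_cube3 chi_def sgn_bit_def f3_cube3 by (simp add: bit_cube3)

lemma f3_needs_two_queries:
  assumes alg: "is_query_alg 3 t W Us" and exact: "computes_exactly 3 W Us f3"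
  shows "2 \<le> t"
proof (rule ccontr)
  assume "\<not> 2 \<le> t"
  then consider "t = 0" | "t = 1" by linarith
  then show False
  proof cases
    case 1
    have "f3 [False,False,True] = f3 [False,False,False]"
      using zero_query_constant alg exact 1 by simp
    then show False by (simp add: f3_cube3)
  next
    case 2
    then show False
      using one_query_top_coefficient f3_top_coefficient alg exact by fastforce
  qed
qed

section \<open>An exact two-query algorithm for f\<close>

text \<open>With workspace dimension 1 the basis state |i>|b> has index 2 i + b.  Matrices and
  vectors are given as lists of rows/entries, read as functions (zero outside the lists).\<close>
definition matl :: "complex list list \<Rightarrow> nat \<Rightarrow> nat \<Rightarrow> complex" where
  "matl M i j = (if i < length M \<and> j < length (M!i) then M!i!j else 0)"

definition vecl :: "complex list \<Rightarrow> nat \<Rightarrow> complex" where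
  "vecl l i = (if i < length l then l!i else 0)"

definition mat_vec :: "nat \<Rightarrow> complex list list \<Rightarrow> (nat \<Rightarrow> complex) \<Rightarrow> complex list" where
  "mat_vec n M v = map (\<lambda>row. \<Sum>j<n. (if j < length row then row!j else 0) * v j) M"

definition query_list :: "bool list \<Rightarrow> complex list \<Rightarrow> complex list" where
  "query_list xs l = map (\<lambda>(k,a). (if bit xs (k div 2) then -1 else 1) * a) (zip [0..<length l] l)"

lemma apply_op_matl: "apply_op n (matl M) v = vecl (mat_vec n M v)"
  by (rule ext) (simp add: apply_op_def matl_def vecl_def mat_vec_def)

lemma query_op_vecl: "query_op (Suc 0) xs (vecl l) = vecl (query_list xs l)"
  by (rule ext) (simp add: query_op_def vecl_def query_list_def)

lemma init_state_vecl: "init_state = vecl [1,0,0,0,0,0,0,0]"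
  by (rule ext) (simp add: init_state_def vecl_def nth_Cons')

text \<open>A list of eight rows of length eight defines a unitary when its Gram matrix is the
  identity; this reduces unitarity to a finite computation.\<close>
definition gram :: "complex list list \<Rightarrow> complex list list" where
  "gram M = map (\<lambda>j. map (\<lambda>k. sum_list (map (\<lambda>row. cnj (row!j) * row!k) M)) [0..<8]) [0..<8]"

definition id8 :: "complex list list" where
  "id8 = map (\<lambda>j. map (\<lambda>k. if j = k then 1 else 0) [0..<8]) [0..<8]"

lemma gram_unitary:
  assumes len: "length M = 8" and rows: "\<forall>row\<in>set M. length row = 8" and gram: "gram M = id8"
  shows "is_unitary 8 (matl M)"
  unfolding is_unitary_def
proof (intro allI impI)
  fix j k :: nat assume j: "j < 8" and k: "k < 8"
  have "(\<Sum>i<8. cnj (matl M i j) * matl M i k) = (\<Sum>i<length M. cnj (M!i!j) * M!i!k)"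
    using len rows j k by (intro sum.cong) (auto simp: matl_def)
  also have "\<dots> = sum_list (map (\<lambda>row. cnj (row!j) * row!k) M)"
    by (simp add: sum_list_sum_nth atLeast0LessThan)
  also have "\<dots> = gram M ! j ! k" using j k by (simp add: gram_def)
  also have "\<dots> = (if j = k then 1 else 0)" using j k by (simp add: gram id8_def)
  finally show "(\<Sum>i<8. cnj (matl M i j) * matl M i k) = (if j = k then 1 else 0)" .
qed

definition sqrt2 :: complex where
  "sqrt2 = of_real (sqrt 2)"

lemma sqrt2_square [simp]: "sqrt2 * sqrt2 = 2"
  unfolding sqrt2_def by (metis of_real_mult of_real_numeral real_sqrt_mult_self abs_numeral)

lemma cnj_sqrt2 [simp]: "cnj sqrt2 = sqrt2"
  unfolding sqrt2_def by simp

text \<open>U_0 sends |0>|0> to the uniform superposition of |i>|0>, i = 0..3; the first query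
  then writes the signs (-1)^{x_i} into the amplitudes, which U_1, the second query and U_2
  combine so that the amplitudes on the wrong output bit cancel.\<close>
definition U0 :: "complex list list" where
  "U0 = [[1/2,0,1/2,0,1/2,0,1/2,0],
         [0,1,0,0,0,0,0,0],
         [1/2,0,-1/2,0,1/2,0,-1/2,0],
         [0,0,0,1,0,0,0,0],
         [1/2,0,1/2,0,-1/2,0,-1/2,0],
         [0,0,0,0,0,1,0,0],
         [1/2,0,-1/2,0,-1/2,0,1/2,0],
         [0,0,0,0,0,0,0,1]]"

definition U1 :: "complex list list" where
  "U1 = [[sqrt2/4, 0, sqrt2/4, sqrt2/2, sqrt2/4, 0, sqrt2/4, 0],
         [0, 1, 0, 0, 0, 0, 0, 0],
         [sqrt2/4, 0, -sqrt2/4, 0, -sqrt2/4, sqrt2/2, sqrt2/4, 0],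
         [1/2, 0, 0, 0, 0, 0, -1/2, sqrt2/2],
         [sqrt2/4, 0, -sqrt2/4, 0, -sqrt2/4, -sqrt2/2, sqrt2/4, 0],
         [1/2, 0, 0, 0, 0, 0, -1/2, -sqrt2/2],
         [0, 0, sqrt2/2, 0, -sqrt2/2, 0, 0, 0],
         [sqrt2/4, 0, sqrt2/4, -sqrt2/2, sqrt2/4, 0, sqrt2/4, 0]]"

definition U2 :: "complex list list" where
  "U2 = [[sqrt2/2, 0, 0, 0, 0, 0, 0, sqrt2/2],
         [0, 0, sqrt2/2, 0, sqrt2/2, 0, 0, 0],
         [0, 0, sqrt2/2, 0, -sqrt2/2, 0, 0, 0],
         [sqrt2/2, 0, 0, 0, 0, 0, 0, -sqrt2/2],
         [0, 0, 0, sqrt2/2, 0, -sqrt2/2, 0, 0],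
         [0, 0, 0, sqrt2/2, 0, sqrt2/2, 0, 0],
         [0, 0, 0, 0, 0, 0, 1, 0],
         [0, 1, 0, 0, 0, 0, 0, 0]]"

definition f3_alg :: "(nat \<Rightarrow> nat \<Rightarrow> complex) list" where
  "f3_alg = [matl U0, matl U1, matl U2]"

lemma qdim_f3_alg: "qdim 3 (Suc 0) = 8"
  by (simp add: qdim_def)

lemma f3_alg_is_query_alg: "is_query_alg 3 2 1 f3_alg"
proof -
  have "is_unitary 8 (matl U0)" "is_unitary 8 (matl U1)" "is_unitary 8 (matl U2)"
    by (rule gram_unitary; simp add: U0_def U1_def U2_def gram_def id8_def upt_rec)+
  then show ?thesis unfolding is_query_alg_def f3_alg_def by (simp add: qdim_f3_alg)
qed

lemma final_state_f3_alg:
  "final_state 3 1 xs f3_alg = vecl (mat_vec 8 U2 (vecl (query_list xs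
     (mat_vec 8 U1 (vecl (query_list xs (mat_vec 8 U0 (vecl [1,0,0,0,0,0,0,0]))))))))"
  by (simp add: f3_alg_def qdim_f3_alg init_state_vecl apply_op_matl query_op_vecl)

lemma out_prob_dim8:
  "out_prob 3 1 v b = (\<Sum>k<(8::nat). if odd k \<longleftrightarrow> b then (cmod (v k))\<^sup>2 else 0)"
proof -
  have outcome_b: "{k. k < qdim 3 1 \<and> (odd k \<longleftrightarrow> b)} = {k\<in>{..<8}. odd k \<longleftrightarrow> b}"
    by (auto simp: qdim_f3_alg)
  show ?thesis unfolding out_prob_def outcome_b sum.inter_filter[OF finite_lessThan] ..
qed

lemma sum_lessThan_8:
  "(\<Sum>i<(8::nat). g i) = g 0 + g 1 + g 2 + g 3 + g 4 + g 5 + g 6 + (g 7 :: 'a::comm_monoid_add)"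
  by (simp add: eval_nat_numeral add_ac)

lemma f3_alg_never_wrong: "out_prob 3 1 (final_state 3 1 [a,b,c] f3_alg) (\<not> f3 [a,b,c]) = 0"
  unfolding final_state_f3_alg out_prob_dim8 sum_lessThan_8 f3_cube3
  by (cases a; cases b; cases c;
      simp add: mat_vec_def query_list_def U0_def U1_def U2_def sum_lessThan_8 vecl_def
        bit_cube3 upt_rec)

lemma f3_alg_exact: "computes_exactly 3 1 f3_alg f3"
proof (rule exact_if_wrong_output_impossible[OF f3_alg_is_query_alg])
  fix xs :: "bool list" assume "length xs = 3"
  then obtain a b c where "xs = [a,b,c]"
    by (metis (no_types) length_0_conv length_Suc_conv numeral_3_eq_3)
  then show "out_prob 3 1 (final_state 3 1 xs f3_alg) (\<not> f3 xs) = 0"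
    using f3_alg_never_wrong by simp
qed

section \<open>Parity decision trees of depth at most two\<close>

lemma parity_empty [simp]: "parity {} xs = False"
  by (simp add: parity_def)

lemma parity_cube3: "parity S [p,q,r] = ((1\<in>S \<and> p) \<noteq> ((2\<in>S \<and> q) \<noteq> (3\<in>S \<and> r)))"
proof -
  have bits_in_S: "{i\<in>S. bit [p,q,r] i} = (if 1\<in>S \<and> p then {1} else {}) \<union> (if 2\<in>S \<and> q then {2} else {})
                                \<union> (if 3\<in>S \<and> r then {3::nat} else {})"
    unfolding bit_cube3 by auto
  show ?thesis unfolding parity_def bits_in_S
    by (cases "1\<in>S"; cases p; cases "2\<in>S"; cases q; cases "3\<in>S"; cases r; simp)
qed

lemma depth1_affine_parity:
  assumes "pdt_depth T \<le> 1"
  shows "\<exists>S c. \<forall>xs. pdt_eval T xs = (parity S xs \<noteq> c)"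
proof (cases T)
  case (Leaf b)
  then show ?thesis by (intro exI[of _ "{}"] exI[of _ b]) simp
next
  case (Node S l r)
  then obtain b1 b2 where l: "l = Leaf b1" and r: "r = Leaf b2"
    using assms by (cases l; cases r) auto
  show ?thesis
  proof (cases "b1 = b2")
    case True then show ?thesis using Node l r by (intro exI[of _ "{}"] exI[of _ b1]) simp
  next
    case False then show ?thesis using Node l r by (intro exI[of _ S] exI[of _ b1]) auto
  qed
qed

text \<open>A tree of depth at most two branches once on a parity and then outputs an affine
  parity function (a leaf is covered by the empty parities).\<close>
lemma depth2_normal_form:
  assumes "pdt_depth T \<le> 2"
  shows "\<exists>S L R c1 c2. \<forall>xs.
           pdt_eval T xs = (if parity S xs then parity R xs \<noteq> c2 else parity L xs \<noteq> c1)"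
proof (cases T)
  case (Leaf b)
  then have "\<forall>xs. pdt_eval T xs = (if parity {} xs then parity {} xs \<noteq> b else parity {} xs \<noteq> b)"
    by simp
  then show ?thesis by blast
next
  case (Node S l r)
  then have "pdt_depth l \<le> 1" "pdt_depth r \<le> 1" using assms by auto
  then obtain L c1 R c2 where L: "\<forall>xs. pdt_eval l xs = (parity L xs \<noteq> c1)"
      and R: "\<forall>xs. pdt_eval r xs = (parity R xs \<noteq> c2)"
    using depth1_affine_parity by metis
  have "\<forall>xs. pdt_eval T xs = (if parity S xs then parity R xs \<noteq> c2 else parity L xs \<noteq> c1)"
    using Node L R by simp
  then show ?thesis by blast
qed

text \<open>The depth-two normal form written out on the cube, in terms of the membership bits
  p_i, l_i, r_i of position i in S, L, R: no choice of these bits and of c1, c2 yields f; this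
  is a finite check.\<close>
lemma branching_parity_not_f3:
  assumes "\<forall>x y z. (if (p1 \<and> x) \<noteq> ((p2 \<and> y) \<noteq> (p3 \<and> z))
                    then ((r1 \<and> x) \<noteq> ((r2 \<and> y) \<noteq> (r3 \<and> z))) \<noteq> c2
                    else ((l1 \<and> x) \<noteq> ((l2 \<and> y) \<noteq> (l3 \<and> z))) \<noteq> c1)
                 = (x \<and> y \<or> \<not> x \<and> \<not> y \<and> z)"
  shows False
  using assms[rule_format, of False False False] assms[rule_format, of False False True]
    assms[rule_format, of False True False] assms[rule_format, of False True True]
    assms[rule_format, of True False False] assms[rule_format, of True False True]
    assms[rule_format, of True True False] assms[rule_format, of True True True]
  by (cases p1; cases p2; cases p3; cases c1; cases c2; simp; blast)

lemma f3_not_depth2_form: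
  "\<not> (\<forall>xs\<in>cube3. (if parity S xs then parity R xs \<noteq> c2 else parity L xs \<noteq> c1) = f3 xs)"
proof
  assume agree: "\<forall>xs\<in>cube3. (if parity S xs then parity R xs \<noteq> c2 else parity L xs \<noteq> c1) = f3 xs"
  show False
  proof (rule branching_parity_not_f3[of "1\<in>S" "2\<in>S" "3\<in>S" "1\<in>R" "2\<in>R" "3\<in>R" c2
                                      "1\<in>L" "2\<in>L" "3\<in>L" c1], intro allI)
    fix x y z
    have "(if parity S [x,y,z] then parity R [x,y,z] \<noteq> c2 else parity L [x,y,z] \<noteq> c1)
          = f3 [x,y,z]"
      using agree by (simp add: cube3_def)
    then show "(if (1\<in>S \<and> x) \<noteq> ((2\<in>S \<and> y) \<noteq> (3\<in>S \<and> z))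
                then ((1\<in>R \<and> x) \<noteq> ((2\<in>R \<and> y) \<noteq> (3\<in>R \<and> z))) \<noteq> c2
                else ((1\<in>L \<and> x) \<noteq> ((2\<in>L \<and> y) \<noteq> (3\<in>L \<and> z))) \<noteq> c1)
               = (x \<and> y \<or> \<not> x \<and> \<not> y \<and> z)"
      by (simp only: parity_cube3 f3_cube3)
  qed
qed

lemma f3_pdt_depth:
  assumes "pdt_computes 3 T f3"
  shows "3 \<le> pdt_depth T"
proof (rule ccontr)
  assume "\<not> 3 \<le> pdt_depth T"
  then have "pdt_depth T \<le> 2" by simp
  then obtain S L R c1 c2 where "\<forall>xs.
      pdt_eval T xs = (if parity S xs then parity R xs \<noteq> c2 else parity L xs \<noteq> c1)"
    using depth2_normal_form by blast
  with assms have "\<forall>xs\<in>cube3. (if parity S xs then parity R xs \<noteq> c2 else parity L xs \<noteq> c1) = f3 xs"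
    unfolding pdt_computes_def cube3_def by simp
  with f3_not_depth2_form show False by blast
qed

theorem mainTheorem7:
  shows "Q_E 3 f3 = 2 \<and> (\<forall>T. pdt_computes 3 T f3 \<longrightarrow> pdt_depth T \<ge> 3)"
proof
  show "Q_E 3 f3 = 2"
    unfolding Q_E_def
  proof (rule Least_equality)
    show "\<exists>W Us. is_query_alg 3 2 W Us \<and> computes_exactly 3 W Us f3"
      using f3_alg_is_query_alg f3_alg_exact by blast
    show "2 \<le> t" if "\<exists>W Us. is_query_alg 3 t W Us \<and> computes_exactly 3 W Us f3" for t
      using that f3_needs_two_queries by blast
  qed
  show "\<forall>T. pdt_computes 3 T f3 \<longrightarrow> pdt_depth T \<ge> 3"
    using f3_pdt_depth by blast
qed

end
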